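(* Let $\nu\in\mathcal{P}_2(\mathbb{R}^2)$, let $\gamma$ be an optimal plan (a minimizer of $\int c\,d\gamma$ over $\Gamma(\nu)$) and $\mu$ its $x$-marginal. Then $\gamma$ minimizes $\int c(x,y)\,d\pi$ over $\pi\in\Pi(\mu,\nu)$.
   Context: $c(x,y)=(x_1-y_1)(x_2-y_2)$ for $x,y\in\mathbb{R}^2$. $\mathcal{P}_2(\mathbb{R}^d)$: Borel probability measures with finite second moment. $\Gamma(\nu)$: the set of $\gamma\in\mathcal{P}_2(\mathbb{R}^2\times\mathbb{R}^2)$ (points $(x,y)$) with $y$-marginal $\nu$ and $\gamma(y|x)=x$ (conditional expectation of $y$ given $x$ equals $x$, $\gamma$-a.s.). $\Pi(\mu,\nu)$ is the set of Borel probability measures on $\mathbb{R}^2\times\mathbb{R}^2$ with $x$-marginal $\mu$ and $y$-marginal $\nu$. *)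

theory Defs
  imports "HOL-Probability.Probability"
begin

type_synonym pt = "real \<times> real"

definition cost :: "pt \<Rightarrow> pt \<Rightarrow> real" where
  "cost x y = (fst x - fst y) * (snd x - snd y)"

definition P2 :: "('a::euclidean_space) measure set" where
  "P2 = {M. prob_space M \<and> sets M = sets borel \<and> integrable M (\<lambda>z. (norm z)^2)}"

definition Couplings :: "pt measure \<Rightarrow> pt measure \<Rightarrow> (pt \<times> pt) measure set" where
  "Couplings \<mu> \<nu> = {\<pi>. prob_space \<pi> \<and> sets \<pi> = sets borel \<and>
      distr \<pi> borel fst = \<mu> \<and> distr \<pi> borel snd = \<nu>}"

definition Gamma_mart :: "pt measure \<Rightarrow> (pt \<times> pt) measure set" where
  "Gamma_mart \<nu> = {\<gamma>. \<gamma> \<in> P2 \<and> distr \<gamma> borel snd = \<nu> \<and>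
      (AE p in \<gamma>. real_cond_exp \<gamma> (vimage_algebra (space \<gamma>) fst borel) (\<lambda>q. fst (snd q)) p = fst (fst p)) \<and>
      (AE p in \<gamma>. real_cond_exp \<gamma> (vimage_algebra (space \<gamma>) fst borel) (\<lambda>q. snd (snd q)) p = snd (fst p))}"

definition total_cost :: "(pt \<times> pt) measure \<Rightarrow> real" where
  "total_cost \<pi> = (\<integral>p. cost (fst p) (snd p) \<partial>\<pi>)"

end

theory Submission
  imports Defs
begin

text \<open>
  Let \<open>\<pi>\<close> be any coupling of \<open>\<mu>\<close> and \<open>\<nu>\<close> and let \<open>h(x) = E\<^sub>\<pi>[y | x]\<close> be its
  barycentric projection. Since \<open>c(x,y) = x\<^sub>1x\<^sub>2 - x\<^sub>1y\<^sub>2 - x\<^sub>2y\<^sub>1 + y\<^sub>1y\<^sub>2\<close>, conditioning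
  on \<open>x\<close> gives \<open>\<integral>c d\<pi> = \<integral>(x\<^sub>1x\<^sub>2 - x\<^sub>1h\<^sub>2(x) - x\<^sub>2h\<^sub>1(x)) d\<mu> + \<integral>y\<^sub>1y\<^sub>2 d\<nu>\<close>; for the
  martingale plan \<open>\<gamma>\<close> we have \<open>h = id\<close>, so \<open>\<integral>c d\<gamma> \<le> \<integral>c d\<pi>\<close> amounts to
  \<open>\<integral>(x\<^sub>1h\<^sub>2 + x\<^sub>2h\<^sub>1) d\<mu> \<le> 2\<integral>x\<^sub>1x\<^sub>2 d\<mu>\<close>.

  To get this, move the first coordinate to \<open>z\<^sub>t(x) = (1-t)x + t h(x)\<close> in both \<open>\<gamma>\<close> and \<open>\<pi>\<close>
  and mix the two resulting plans with weights \<open>1-t\<close> and \<open>t\<close>. The conditional mean of \<open>y\<close>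
  given \<open>z\<^sub>t(x)\<close> is then \<open>(1-t)x + t h(x) = z\<^sub>t(x)\<close>, so the mixture lies in \<open>\<Gamma>(\<nu>)\<close> and costs
  \<open>\<integral>y\<^sub>1y\<^sub>2 d\<nu> - \<integral>(z\<^sub>t)\<^sub>1(z\<^sub>t)\<^sub>2 d\<mu>\<close>. Optimality of \<open>\<gamma>\<close> against these plans for all small \<open>t > 0\<close>
  is exactly the inequality above (first-order condition at \<open>t = 0\<close>).
\<close>

lemma measurable_fst_borel [measurable]:
  "fst \<in> (borel :: ('a::second_countable_topology \<times> 'b::second_countable_topology) measure) \<rightarrow>\<^sub>M borel"
  using measurable_fst[of "borel :: 'a measure" "borel :: 'b measure"] by (simp add: borel_prod)

lemma measurable_snd_borel [measurable]:
  "snd \<in> (borel :: ('a::second_countable_topology \<times> 'b::second_countable_topology) measure) \<rightarrow>\<^sub>M borel"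
  using measurable_snd[of "borel :: 'a measure" "borel :: 'b measure"] by (simp add: borel_prod)

lemma distr_map_fst:
  fixes M :: "('a::second_countable_topology \<times> 'b::second_countable_topology) measure"
    and \<phi> :: "'a \<Rightarrow> 'c::second_countable_topology"
  assumes [measurable_cong]: "sets M = sets borel" and [measurable]: "\<phi> \<in> borel_measurable borel"
  shows "distr (distr M borel (\<lambda>p. (\<phi> (fst p), snd p))) borel fst = distr (distr M borel fst) borel \<phi>"
    and "distr (distr M borel (\<lambda>p. (\<phi> (fst p), snd p))) borel snd = distr M borel snd"
proof -
  let ?T = "\<lambda>p::'a \<times> 'b. (\<phi> (fst p), snd p)"
  have "distr (distr M borel ?T) borel fst = distr M borel (fst \<circ> ?T)"
    by (rule distr_distr) measurable
  also have "fst \<circ> ?T = \<phi> \<circ> fst"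
    by auto
  also have "distr M borel (\<phi> \<circ> fst) = distr (distr M borel fst) borel \<phi>"
    by (rule distr_distr[symmetric]) measurable
  finally show "distr (distr M borel ?T) borel fst = distr (distr M borel fst) borel \<phi>" .
  have "distr (distr M borel ?T) borel snd = distr M borel (snd \<circ> ?T)"
    by (rule distr_distr) measurable
  also have "snd \<circ> ?T = snd"
    by auto
  finally show "distr (distr M borel ?T) borel snd = distr M borel snd" .
qed

lemma borel_measurable_bounded_linear:
  "bounded_linear l \<Longrightarrow> l \<in> borel_measurable borel"
  by (intro borel_measurable_continuous_onI linear_continuous_on)

lemma bounded_linear_fst_snd:
  "l \<in> {fst, snd} \<Longrightarrow> bounded_linear (l :: real \<times> real \<Rightarrow> real)"
  using bounded_linear_fst bounded_linear_snd by blast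

lemma integrable_mult_square_integrable:
  fixes f g :: "'a \<Rightarrow> real"
  assumes "f \<in> borel_measurable M" "g \<in> borel_measurable M"
    and "integrable M (\<lambda>x. (f x)\<^sup>2)" "integrable M (\<lambda>x. (g x)\<^sup>2)"
  shows "integrable M (\<lambda>x. f x * g x)"
proof (rule Bochner_Integration.integrable_bound)
  show "integrable M (\<lambda>x. (f x)\<^sup>2 + (g x)\<^sup>2)"
    using assms(3,4) by (rule Bochner_Integration.integrable_add)
  have "\<bar>a * b\<bar> \<le> a\<^sup>2 + b\<^sup>2" for a b :: real
  proof -
    have "2 * \<bar>a * b\<bar> \<le> a\<^sup>2 + b\<^sup>2"
      using sum_squares_bound[of "\<bar>a\<bar>" "\<bar>b\<bar>"] by (simp add: abs_mult power2_eq_square)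
    then show ?thesis using abs_ge_zero[of "a * b"] by linarith
  qed
  then show "AE x in M. norm (f x * g x) \<le> norm ((f x)\<^sup>2 + (g x)\<^sup>2)"
    by simp
qed (use assms in measurable)

lemma square_integrable_bounded_linear:
  fixes f :: "'a \<Rightarrow> 'b::real_normed_vector" and l :: "'b \<Rightarrow> real"
  assumes l: "bounded_linear l" and f: "f \<in> borel_measurable M" "integrable M (\<lambda>x. (norm (f x))\<^sup>2)"
  shows "integrable M (\<lambda>x. (l (f x))\<^sup>2)"
proof -
  obtain K where K: "\<And>y. \<bar>l y\<bar> \<le> norm y * K"
    using bounded_linear.bounded[OF l] by auto
  have bound: "(l y)\<^sup>2 \<le> K\<^sup>2 * (norm y)\<^sup>2" for y
    using power_mono[OF K[of y], of 2] by (simp add: power_mult_distrib mult.commute)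
  have "(\<lambda>x. (l (f x))\<^sup>2) \<in> borel_measurable M"
    using l by (intro borel_measurable_power measurable_compose[OF f(1)] borel_measurable_bounded_linear)
  then show ?thesis
    by (rule Bochner_Integration.integrable_bound[OF integrable_mult_right[OF f(2), of "K\<^sup>2"]])
       (simp add: bound)
qed

lemma square_integrable_scaleR_add:
  fixes u v :: "'a \<Rightarrow> 'b::{real_normed_vector, second_countable_topology}"
  assumes "u \<in> borel_measurable M" "v \<in> borel_measurable M"
    and "integrable M (\<lambda>x. (norm (u x))\<^sup>2)" "integrable M (\<lambda>x. (norm (v x))\<^sup>2)"
  shows "integrable M (\<lambda>x. (norm (a *\<^sub>R u x + b *\<^sub>R v x))\<^sup>2)"
proof -
  have bound: "(norm (a *\<^sub>R p + b *\<^sub>R q))\<^sup>2 \<le> 2 * a\<^sup>2 * (norm p)\<^sup>2 + 2 * b\<^sup>2 * (norm q)\<^sup>2" for p q :: 'b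
  proof -
    have "norm (a *\<^sub>R p + b *\<^sub>R q) \<le> \<bar>a\<bar> * norm p + \<bar>b\<bar> * norm q"
      using norm_triangle_ineq[of "a *\<^sub>R p" "b *\<^sub>R q"] by simp
    then have "(norm (a *\<^sub>R p + b *\<^sub>R q))\<^sup>2 \<le> (\<bar>a\<bar> * norm p + \<bar>b\<bar> * norm q)\<^sup>2"
      by (rule power_mono) simp
    also have "\<dots> \<le> 2 * a\<^sup>2 * (norm p)\<^sup>2 + 2 * b\<^sup>2 * (norm q)\<^sup>2"
      using sum_squares_bound[of "\<bar>a\<bar> * norm p" "\<bar>b\<bar> * norm q"]
      unfolding power2_eq_square by (simp only: abs_mult_self_eq algebra_simps) linarith
    finally show ?thesis .
  qed
  have "integrable M (\<lambda>x. 2 * a\<^sup>2 * (norm (u x))\<^sup>2 + 2 * b\<^sup>2 * (norm (v x))\<^sup>2)"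
    using assms(3,4) by (intro Bochner_Integration.integrable_add integrable_mult_right)
  moreover have "(\<lambda>x. (norm (a *\<^sub>R u x + b *\<^sub>R v x))\<^sup>2) \<in> borel_measurable M"
    using assms(1,2) by measurable
  ultimately show ?thesis
    by (rule Bochner_Integration.integrable_bound) (simp add: bound)
qed

section \<open>Mixtures of probability measures\<close>

definition mix_measure :: "real \<Rightarrow> 'a measure \<Rightarrow> 'a measure \<Rightarrow> 'a measure" where
  "mix_measure t A B = measure_pmf (bernoulli_pmf t) \<bind> (\<lambda>b. if b then B else A)"

lemma mix_measure_kernel:
  assumes "prob_space A" "prob_space B" "sets B = sets A"
  shows "(\<lambda>b. if b then B else A) \<in> measure_pmf (bernoulli_pmf t) \<rightarrow>\<^sub>M subprob_algebra A"
proof -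
  have "(\<lambda>b. if b then B else A) \<in> count_space UNIV \<rightarrow>\<^sub>M subprob_algebra A"
    using assms by (auto simp: space_subprob_algebra prob_space_imp_subprob_space)
  then show ?thesis by (simp add: measurable_cong_sets)
qed

lemma sets_mix_measure:
  assumes "prob_space A" "prob_space B" "sets B = sets A"
  shows "sets (mix_measure t A B) = sets A"
  unfolding mix_measure_def by (rule sets_bind[where N=A]) (use assms in auto)

lemma prob_space_mix_measure:
  assumes "prob_space A" "prob_space B" "sets B = sets A"
  shows "prob_space (mix_measure t A B)"
  unfolding mix_measure_def
  by (rule prob_space.prob_space_bind[OF prob_space_measure_pmf _ mix_measure_kernel[OF assms]])
     (use assms in auto)

lemma nn_integral_mix_measure:
  assumes "prob_space A" "prob_space B" "sets B = sets A" "0 \<le> t" "t \<le> 1"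
    and "f \<in> borel_measurable A"
  shows "(\<integral>\<^sup>+x. f x \<partial>mix_measure t A B) = ennreal t * (\<integral>\<^sup>+x. f x \<partial>B) + ennreal (1 - t) * (\<integral>\<^sup>+x. f x \<partial>A)"
  unfolding mix_measure_def
  by (subst nn_integral_bind[OF assms(6) mix_measure_kernel[OF assms(1-3)]])
     (use assms in \<open>simp add: mult.commute\<close>)

lemma has_bochner_integral_mix_measure_nonneg:
  fixes f :: "'a \<Rightarrow> real"
  assumes A: "prob_space A" "prob_space B" "sets B = sets A" and t: "0 \<le> t" "t \<le> 1"
    and f: "integrable A f" "integrable B f" "\<And>x. 0 \<le> f x"
  shows "has_bochner_integral (mix_measure t A B) f (t * integral\<^sup>L B f + (1 - t) * integral\<^sup>L A f)"
proof (rule has_bochner_integral_nn_integral)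
  have [measurable_cong]: "sets (mix_measure t A B) = sets A"
    using A by (rule sets_mix_measure)
  show "f \<in> borel_measurable (mix_measure t A B)"
    using f by measurable
  have "(\<integral>\<^sup>+x. f x \<partial>mix_measure t A B) = ennreal t * (\<integral>\<^sup>+x. f x \<partial>B) + ennreal (1 - t) * (\<integral>\<^sup>+x. f x \<partial>A)"
    by (rule nn_integral_mix_measure) (use A t f in auto)
  also have "\<dots> = ennreal (t * integral\<^sup>L B f + (1 - t) * integral\<^sup>L A f)"
    using t f by (simp add: nn_integral_eq_integral ennreal_mult ennreal_plus integral_nonneg)
  finally show "(\<integral>\<^sup>+x. f x \<partial>mix_measure t A B) = ennreal (t * integral\<^sup>L B f + (1 - t) * integral\<^sup>L A f)" .
qed (use t f in \<open>auto simp: integral_nonneg\<close>)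

lemma has_bochner_integral_mix_measure:
  fixes f :: "'a \<Rightarrow> real"
  assumes A: "prob_space A" "prob_space B" "sets B = sets A" and t: "0 \<le> t" "t \<le> 1"
    and f: "integrable A f" "integrable B f"
  shows "has_bochner_integral (mix_measure t A B) f (t * integral\<^sup>L B f + (1 - t) * integral\<^sup>L A f)"
proof -
  define fp fn where "fp x = max (f x) 0" and "fn x = max (- f x) 0" for x
  have split: "integral\<^sup>L N f = integral\<^sup>L N fp - integral\<^sup>L N fn" if "integrable N f" for N
  proof -
    have "integral\<^sup>L N (\<lambda>x. fp x - fn x) = integral\<^sup>L N fp - integral\<^sup>L N fn"
      using that unfolding fp_def fn_def by (intro Bochner_Integration.integral_diff) auto
    moreover have "(\<lambda>x. fp x - fn x) = f" by (auto simp: fp_def fn_def)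
    ultimately show ?thesis by simp
  qed
  have "has_bochner_integral (mix_measure t A B) (\<lambda>x. fp x - fn x)
      ((t * integral\<^sup>L B fp + (1 - t) * integral\<^sup>L A fp) - (t * integral\<^sup>L B fn + (1 - t) * integral\<^sup>L A fn))"
    using A t f unfolding fp_def fn_def
    by (intro has_bochner_integral_diff has_bochner_integral_mix_measure_nonneg) auto
  moreover have "(\<lambda>x. fp x - fn x) = f" by (auto simp: fp_def fn_def)
  moreover have "(t * integral\<^sup>L B fp + (1 - t) * integral\<^sup>L A fp) - (t * integral\<^sup>L B fn + (1 - t) * integral\<^sup>L A fn)
      = t * integral\<^sup>L B f + (1 - t) * integral\<^sup>L A f"
    unfolding split[OF f(1)] split[OF f(2)] by (simp add: algebra_simps)
  ultimately show ?thesis by simp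
qed

lemma distr_mix_measure:
  assumes "prob_space A" "prob_space B" "sets B = sets A" "f \<in> A \<rightarrow>\<^sub>M N"
  shows "distr (mix_measure t A B) N f = mix_measure t (distr A N f) (distr B N f)"
proof -
  have "distr (mix_measure t A B) N f = measure_pmf (bernoulli_pmf t) \<bind> (\<lambda>b. distr (if b then B else A) N f)"
    unfolding mix_measure_def
    by (rule distr_bind[OF mix_measure_kernel[OF assms(1-3)]]) (use assms in auto)
  also have "(\<lambda>b. distr (if b then B else A) N f) = (\<lambda>b. if b then distr B N f else distr A N f)"
    by auto
  finally show ?thesis unfolding mix_measure_def .
qed

lemma mix_measure_same:
  assumes "prob_space A"
  shows "mix_measure t A A = A"
  unfolding mix_measure_def using assms
  by (simp add: bind_const' prob_space_measure_pmf prob_space_imp_subprob_space)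

section \<open>Conditional expectation given a measurable map\<close>

lemma sigma_finite_subalgebra_vimage_algebra:
  assumes "finite_measure M" "f \<in> M \<rightarrow>\<^sub>M N"
  shows "sigma_finite_subalgebra M (vimage_algebra (space M) f N)"
proof (rule finite_measure_subalgebra_is_sigma_finite)
  have "sets (vimage_algebra (space M) f N) \<subseteq> sets M"
    using assms(2) by (auto simp: sets_vimage_algebra2 measurable_space measurable_sets)
  then show "finite_measure_subalgebra M (vimage_algebra (space M) f N)"
    using assms(1)
    by (simp add: finite_measure_subalgebra_def finite_measure_subalgebra_axioms_def subalgebra_def)
qed

lemma
  fixes g :: "'a \<Rightarrow> real" and k \<psi> :: "'b \<Rightarrow> real"
  assumes M: "finite_measure M" and f: "f \<in> M \<rightarrow>\<^sub>M N"
    and g: "g \<in> borel_measurable M" "integrable M (\<lambda>x. (g x)\<^sup>2)"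
    and k: "k \<in> borel_measurable N"
      "AE x in M. real_cond_exp M (vimage_algebra (space M) f N) g x = k (f x)"
    and \<psi>: "\<psi> \<in> borel_measurable N" "integrable M (\<lambda>x. (\<psi> (f x))\<^sup>2)"
  shows integrable_mult_real_cond_exp_vimage: "integrable M (\<lambda>x. \<psi> (f x) * g x)"
    and integral_mult_real_cond_exp_vimage:
      "(\<integral>x. \<psi> (f x) * g x \<partial>M) = (\<integral>x. \<psi> (f x) * k (f x) \<partial>M)"
proof -
  let ?F = "vimage_algebra (space M) f N"
  interpret sigma_finite_subalgebra M ?F
    using M f by (rule sigma_finite_subalgebra_vimage_algebra)
  have fF: "f \<in> ?F \<rightarrow>\<^sub>M N"
    using f by (intro measurable_vimage_algebra1) (simp add: measurable_def)
  have \<psi>M: "(\<lambda>x. \<psi> (f x)) \<in> borel_measurable M"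
    using f \<psi>(1) by measurable
  show int: "integrable M (\<lambda>x. \<psi> (f x) * g x)"
    using \<psi>M g \<psi>(2) by (intro integrable_mult_square_integrable)
  have "(\<integral>x. \<psi> (f x) * g x \<partial>M) = (\<integral>x. \<psi> (f x) * real_cond_exp M ?F g x \<partial>M)"
    by (intro real_cond_exp_intg(2)[symmetric] int measurable_compose[OF fF \<psi>(1)] g(1))
  also have "\<dots> = (\<integral>x. \<psi> (f x) * k (f x) \<partial>M)"
    using k(2) \<psi>M f k(1) by (intro integral_cong_AE) (auto elim!: eventually_mono)
  finally show "(\<integral>x. \<psi> (f x) * g x \<partial>M) = (\<integral>x. \<psi> (f x) * k (f x) \<partial>M)" .
qed

lemma (in sigma_finite_subalgebra) square_integrable_real_cond_exp:
  assumes "integrable M g" "integrable M (\<lambda>x. (g x)\<^sup>2)"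
  shows "integrable M (\<lambda>x. (real_cond_exp M F g x)\<^sup>2)"
proof (rule integrable_convex_cond_exp[where I=UNIV and q="\<lambda>x. x\<^sup>2"])
  show "convex_on UNIV (\<lambda>x::real. x\<^sup>2)"
    by (rule convex_power2)
  show "(\<lambda>x::real. x\<^sup>2) \<in> borel_measurable borel"
    by measurable
qed (use assms in simp_all)

lemma real_cond_exp_vimage_charact:
  fixes g :: "'a \<Rightarrow> real" and k :: "'b \<Rightarrow> real"
  assumes M: "finite_measure M" and f: "f \<in> M \<rightarrow>\<^sub>M N" and k: "k \<in> borel_measurable N"
    and int: "integrable M g" "integrable M (\<lambda>x. k (f x))"
    and test: "\<And>S. S \<in> sets N \<Longrightarrow>
      (\<integral>x. indicator S (f x) * g x \<partial>M) = (\<integral>x. indicator S (f x) * k (f x) \<partial>M)"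
  shows "AE x in M. real_cond_exp M (vimage_algebra (space M) f N) g x = k (f x)"
proof -
  interpret sigma_finite_subalgebra M "vimage_algebra (space M) f N"
    using M f by (rule sigma_finite_subalgebra_vimage_algebra)
  show ?thesis
  proof (rule real_cond_exp_charact)
    fix A assume "A \<in> sets (vimage_algebra (space M) f N)"
    then obtain S where S: "S \<in> sets N" and A: "A = f -` S \<inter> space M"
      using f by (auto simp: sets_vimage_algebra2 measurable_space)
    have "indicator A x = (indicator S (f x) :: real)" if "x \<in> space M" for x
      using that by (simp add: A indicator_def)
    then show "(\<integral>x\<in>A. g x \<partial>M) = (\<integral>x\<in>A. k (f x) \<partial>M)"
      using test[OF S] unfolding set_lebesgue_integral_def by (simp cong: Bochner_Integration.integral_cong)
  next
    show "(\<lambda>x. k (f x)) \<in> borel_measurable (vimage_algebra (space M) f N)"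
      using f k by (intro measurable_compose[OF measurable_vimage_algebra1]) (auto simp: measurable_space)
  qed (use int in auto)
qed

lemma real_cond_exp_fst_factor:
  fixes M :: "('a::topological_space \<times> 'b::topological_space) measure" and g :: "'a \<times> 'b \<Rightarrow> real"
  assumes "sets M = sets borel"
  obtains k where "k \<in> borel_measurable borel"
    and "\<And>p. real_cond_exp M (vimage_algebra (space M) fst borel) g p = k (fst p)"
proof
  let ?F = "vimage_algebra UNIV fst (borel :: 'a measure)"
  let ?H = "real_cond_exp M ?F g"
  have space: "space M = UNIV"
    using sets_eq_imp_space_eq[OF assms] by simp
  have H: "?H \<in> borel_measurable ?F"
    using borel_measurable_cond_exp by (simp add: space)
  \<comment> \<open>\<open>?H\<close> is constant on the fibres of \<open>fst\<close>, so any fixed second coordinate will do\<close>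
  have embed: "(\<lambda>x. (x, undefined)) \<in> (borel :: 'a measure) \<rightarrow>\<^sub>M ?F"
    by (rule measurable_vimage_algebra2) auto
  show "(\<lambda>x. ?H (x, undefined)) \<in> borel_measurable borel"
    using measurable_compose[OF embed H] .
  fix p :: "'a \<times> 'b"
  have "?H -` {?H p} \<in> sets ?F"
    using measurable_sets[OF H, of "{?H p}"] by simp
  then obtain S where S: "?H -` {?H p} = fst -` S"
    by (auto simp: sets_vimage_algebra2)
  have "fst p \<in> S"
    using S by blast
  then have "?H (fst p, undefined) = ?H p"
    using S by (metis fst_conv singletonD vimageD vimageI2)
  then show "real_cond_exp M (vimage_algebra (space M) fst borel) g p = ?H (fst p, undefined)"
    by (simp add: space)
qed

lemma P2D:
  assumes "M \<in> P2"
  shows "prob_space M" "sets M = sets borel" "integrable M (\<lambda>z. (norm z)\<^sup>2)"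
  using assms by (simp_all add: P2_def)

lemma P2_square_integrable:
  fixes l :: "'a::euclidean_space \<Rightarrow> real"
  assumes "M \<in> P2" "bounded_linear l"
  shows "integrable M (\<lambda>z. (l z)\<^sup>2)"
proof -
  have [measurable_cong]: "sets M = sets borel"
    using assms(1) by (simp add: P2_def)
  show ?thesis
    using assms square_integrable_bounded_linear[of l "\<lambda>z. z" M] by (simp add: P2_def)
qed

lemma P2_integrable_bounded_linear:
  fixes l :: "'a::euclidean_space \<Rightarrow> real"
  assumes "M \<in> P2" "bounded_linear l"
  shows "integrable M l"
proof -
  have [measurable_cong]: "sets M = sets borel"
    using assms(1) by (rule P2D)
  have [measurable]: "l \<in> borel_measurable borel"
    using assms(2) by (rule borel_measurable_bounded_linear)
  have "l \<in> borel_measurable M"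
    by measurable
  then show ?thesis
    using finite_measure.square_integrable_imp_integrable[OF prob_space.finite_measure[OF P2D(1)[OF assms(1)]]]
      P2_square_integrable[OF assms] by blast
qed

lemma distr_in_P2_iff:
  fixes f :: "'a \<Rightarrow> 'b::euclidean_space"
  assumes "prob_space M" "f \<in> M \<rightarrow>\<^sub>M borel"
  shows "distr M borel f \<in> P2 \<longleftrightarrow> integrable M (\<lambda>x. (norm (f x))\<^sup>2)"
  using assms by (simp add: P2_def prob_space.prob_space_distr integrable_distr_eq)

lemma P2_of_marginals:
  fixes M :: "('a::euclidean_space \<times> 'b::euclidean_space) measure"
  assumes M: "prob_space M" "sets M = sets borel"
    and "distr M borel fst \<in> P2" "distr M borel snd \<in> P2"
  shows "M \<in> P2"
proof -
  have [measurable_cong]: "sets M = sets borel" by (rule M(2))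
  have "integrable M (\<lambda>z. (norm (fst z))\<^sup>2 + (norm (snd z))\<^sup>2)"
    using assms by (simp add: distr_in_P2_iff)
  moreover have "(norm z)\<^sup>2 = (norm (fst z))\<^sup>2 + (norm (snd z))\<^sup>2" for z :: "'a \<times> 'b"
    by (cases z) (simp add: norm_Pair)
  ultimately show ?thesis
    using M by (simp add: P2_def)
qed

lemma P2_marginals:
  fixes M :: "('a::euclidean_space \<times> 'b::euclidean_space) measure"
  assumes "M \<in> P2"
  shows "distr M borel fst \<in> P2" "distr M borel snd \<in> P2"
proof -
  have [measurable_cong]: "sets M = sets borel"
    using assms by (simp add: P2_def)
  have M: "prob_space M" "integrable M (\<lambda>z. (norm z)\<^sup>2)"
    using assms by (simp_all add: P2_def)
  have "(norm (fst z))\<^sup>2 \<le> (norm z)\<^sup>2" "(norm (snd z))\<^sup>2 \<le> (norm z)\<^sup>2" for z :: "'a \<times> 'b"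
    by (cases z; simp add: norm_Pair)+
  then have "integrable M (\<lambda>z. (norm (fst z))\<^sup>2)" "integrable M (\<lambda>z. (norm (snd z))\<^sup>2)"
    by (auto intro!: Bochner_Integration.integrable_bound[OF M(2)])
  then show "distr M borel fst \<in> P2" "distr M borel snd \<in> P2"
    using M(1) by (simp_all add: distr_in_P2_iff)
qed

lemma Couplings_subset_P2:
  assumes "\<mu> \<in> P2" "\<nu> \<in> P2"
  shows "Couplings \<mu> \<nu> \<subseteq> P2"
proof
  fix \<pi> assume "\<pi> \<in> Couplings \<mu> \<nu>"
  then show "\<pi> \<in> P2"
    by (simp add: Couplings_def P2_of_marginals assms)
qed

section \<open>Barycentric projections and the cost\<close>

definition barycentric_projection :: "(pt \<times> pt) measure \<Rightarrow> (pt \<Rightarrow> pt) \<Rightarrow> bool" where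
  "barycentric_projection M k \<longleftrightarrow> k \<in> borel_measurable borel \<and>
    (\<forall>l\<in>{fst, snd}. AE p in M.
      real_cond_exp M (vimage_algebra (space M) fst borel) (\<lambda>q. l (snd q)) p = l (k (fst p)))"

lemma Gamma_mart_iff:
  "Gamma_mart \<nu> = {\<gamma> \<in> P2. distr \<gamma> borel snd = \<nu> \<and> barycentric_projection \<gamma> (\<lambda>x. x)}"
  by (auto simp: Gamma_mart_def barycentric_projection_def)

lemma barycentric_projection_exists:
  fixes M :: "(pt \<times> pt) measure"
  assumes "sets M = sets borel"
  obtains k where "barycentric_projection M k"
proof -
  obtain k1 where k1: "k1 \<in> borel_measurable borel"
    "\<And>p. real_cond_exp M (vimage_algebra (space M) fst borel) (\<lambda>q. fst (snd q)) p = k1 (fst p)"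
    using real_cond_exp_fst_factor[OF assms] by blast
  obtain k2 where k2: "k2 \<in> borel_measurable borel"
    "\<And>p. real_cond_exp M (vimage_algebra (space M) fst borel) (\<lambda>q. snd (snd q)) p = k2 (fst p)"
    using real_cond_exp_fst_factor[OF assms] by blast
  have "barycentric_projection M (\<lambda>x. (k1 x, k2 x))"
    using k1 k2 by (simp add: barycentric_projection_def)
  then show ?thesis ..
qed

lemma square_integrable_barycentric_projection:
  assumes M: "M \<in> P2" and k: "barycentric_projection M k"
  shows "integrable (distr M borel fst) (\<lambda>x. (norm (k x))\<^sup>2)"
proof -
  have [measurable_cong]: "sets M = sets borel" and "finite_measure M"
    using M by (simp_all add: P2_def prob_space.finite_measure)
  have [measurable]: "k \<in> borel_measurable borel"
    using k by (simp add: barycentric_projection_def)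
  interpret sigma_finite_subalgebra M "vimage_algebra (space M) fst borel"
    using \<open>finite_measure M\<close> by (rule sigma_finite_subalgebra_vimage_algebra) measurable
  have coord: "integrable M (\<lambda>p. (l (k (fst p)))\<^sup>2)" if l: "l \<in> {fst, snd}" for l :: "pt \<Rightarrow> real"
  proof -
    have l_lin: "bounded_linear l"
      using l by (rule bounded_linear_fst_snd)
    then have [measurable]: "l \<in> borel_measurable borel"
      by (rule borel_measurable_bounded_linear)
    have sq: "integrable M (\<lambda>p. (l (snd p))\<^sup>2)"
      using M bounded_linear_compose[OF l_lin bounded_linear_snd] by (rule P2_square_integrable)
    have "integrable M (\<lambda>p. l (snd p))"
      using M bounded_linear_compose[OF l_lin bounded_linear_snd] by (rule P2_integrable_bounded_linear)
    then have jensen: "integrable M (\<lambda>p. (real_cond_exp M (vimage_algebra (space M) fst borel) (\<lambda>q. l (snd q)) p)\<^sup>2)"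
      using sq by (rule square_integrable_real_cond_exp)
    have "AE p in M. real_cond_exp M (vimage_algebra (space M) fst borel) (\<lambda>q. l (snd q)) p = l (k (fst p))"
      using k l by (auto simp: barycentric_projection_def)
    then have "AE p in M. (real_cond_exp M (vimage_algebra (space M) fst borel) (\<lambda>q. l (snd q)) p)\<^sup>2
        = (l (k (fst p)))\<^sup>2"
      by eventually_elim simp
    moreover have "(\<lambda>p. (l (k (fst p)))\<^sup>2) \<in> borel_measurable M"
      by measurable
    ultimately show ?thesis
      by (intro integrable_cong_AE_imp[OF jensen])
  qed
  have "(norm (k x))\<^sup>2 = (fst (k x))\<^sup>2 + (snd (k x))\<^sup>2" for x
    by (cases "k x") (simp add: norm_Pair)
  then have "integrable M (\<lambda>p. (norm (k (fst p)))\<^sup>2)"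
    using Bochner_Integration.integrable_add[OF coord[of fst] coord[of snd]] by simp
  then show ?thesis
    by (subst integrable_distr_eq) measurable
qed

lemma
  assumes M: "M \<in> P2" and k: "barycentric_projection M k" and l: "l \<in> {fst, snd}"
    and \<psi>_meas [measurable]: "\<psi> \<in> borel_measurable borel"
    and \<psi>_sq: "integrable (distr M borel fst) (\<lambda>x. (\<psi> x)\<^sup>2)"
  shows integrable_barycentric_projection:
      "integrable M (\<lambda>p. \<psi> (fst p) * l (snd p))"
      "integrable (distr M borel fst) (\<lambda>x. \<psi> x * l (k x))"
    and integral_barycentric_projection:
      "(\<integral>p. \<psi> (fst p) * l (snd p) \<partial>M) = (\<integral>x. \<psi> x * l (k x) \<partial>distr M borel fst)"
proof -
  have [measurable_cong]: "sets M = sets borel" and "finite_measure M"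
    using M by (simp_all add: P2_def prob_space.finite_measure)
  have l_lin: "bounded_linear l"
    using l by (rule bounded_linear_fst_snd)
  then have [measurable]: "l \<in> borel_measurable borel"
    by (rule borel_measurable_bounded_linear)
  have [measurable]: "k \<in> borel_measurable borel"
    using k by (simp add: barycentric_projection_def)
  have \<psi>M: "integrable M (\<lambda>p. (\<psi> (fst p))\<^sup>2)"
    using \<psi>_sq by (simp add: integrable_distr_eq)
  have "integrable (distr M borel fst) (\<lambda>x. (l (k x))\<^sup>2)"
    by (rule square_integrable_bounded_linear[OF l_lin _ square_integrable_barycentric_projection[OF M k]])
      measurable
  from integrable_mult_square_integrable[OF _ _ \<psi>_sq this]
  show "integrable (distr M borel fst) (\<lambda>x. \<psi> x * l (k x))"
    by measurable
  have "integrable M (\<lambda>p. (l (snd p))\<^sup>2)"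
    using M bounded_linear_compose[OF l_lin bounded_linear_snd] by (rule P2_square_integrable)
  moreover have "AE p in M. real_cond_exp M (vimage_algebra (space M) fst borel) (\<lambda>q. l (snd q)) p = l (k (fst p))"
    using k l by (auto simp: barycentric_projection_def)
  moreover have "fst \<in> M \<rightarrow>\<^sub>M borel" "(\<lambda>q. l (snd q)) \<in> borel_measurable M" "(\<lambda>x. l (k x)) \<in> borel_measurable borel"
    by measurable
  ultimately have "integrable M (\<lambda>p. \<psi> (fst p) * l (snd p))"
    "(\<integral>p. \<psi> (fst p) * l (snd p) \<partial>M) = (\<integral>p. \<psi> (fst p) * l (k (fst p)) \<partial>M)"
    using integrable_mult_real_cond_exp_vimage integral_mult_real_cond_exp_vimage
      \<open>finite_measure M\<close> \<psi>_meas \<psi>M by blast+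
  then show "integrable M (\<lambda>p. \<psi> (fst p) * l (snd p))"
    "(\<integral>p. \<psi> (fst p) * l (snd p) \<partial>M) = (\<integral>x. \<psi> x * l (k x) \<partial>distr M borel fst)"
    by (simp_all add: integral_distr)
qed

lemma total_cost_barycentric_projection:
  assumes M: "M \<in> P2" and k: "barycentric_projection M k"
  shows "total_cost M = (\<integral>x. fst x * snd x \<partial>distr M borel fst) - (\<integral>x. fst x * snd (k x) \<partial>distr M borel fst)
    - (\<integral>x. snd x * fst (k x) \<partial>distr M borel fst) + (\<integral>y. fst y * snd y \<partial>distr M borel snd)"
proof -
  have [measurable_cong]: "sets M = sets borel"
    using M by (simp add: P2_def)
  have sq: "integrable M (\<lambda>p. (fst (fst p))\<^sup>2)" "integrable M (\<lambda>p. (snd (fst p))\<^sup>2)"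
    "integrable M (\<lambda>p. (fst (snd p))\<^sup>2)" "integrable M (\<lambda>p. (snd (snd p))\<^sup>2)"
    using M by (auto intro!: P2_square_integrable bounded_linear_compose[of fst] bounded_linear_compose[of snd]
      bounded_linear_fst bounded_linear_snd)
  have xx: "integrable M (\<lambda>p. fst (fst p) * snd (fst p))"
    and yy: "integrable M (\<lambda>p. fst (snd p) * snd (snd p))"
    using sq by (auto intro!: integrable_mult_square_integrable)
  have \<mu>: "integrable (distr M borel fst) (\<lambda>x. (fst x)\<^sup>2)" "integrable (distr M borel fst) (\<lambda>x. (snd x)\<^sup>2)"
    using sq by (simp_all add: integrable_distr_eq)
  note xy = integrable_barycentric_projection(1)[OF M k _ _ \<mu>(1), of snd]
    integral_barycentric_projection[OF M k _ _ \<mu>(1), of snd]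
  note yx = integrable_barycentric_projection(1)[OF M k _ _ \<mu>(2), of fst]
    integral_barycentric_projection[OF M k _ _ \<mu>(2), of fst]
  have "cost (fst p) (snd p) = fst (fst p) * snd (fst p) - fst (fst p) * snd (snd p)
      - snd (fst p) * fst (snd p) + fst (snd p) * snd (snd p)" for p :: "pt \<times> pt"
    by (simp add: cost_def algebra_simps)
  then have "total_cost M = (\<integral>p. fst (fst p) * snd (fst p) \<partial>M) - (\<integral>p. fst (fst p) * snd (snd p) \<partial>M)
      - (\<integral>p. snd (fst p) * fst (snd p) \<partial>M) + (\<integral>p. fst (snd p) * snd (snd p) \<partial>M)"
    using xx yy xy(1) yx(1) by (simp add: total_cost_def)
  then show ?thesis
    using xy(2) yx(2) by (simp add: integral_distr)
qed

lemma total_cost_Gamma_mart: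
  assumes "\<gamma> \<in> Gamma_mart \<nu>"
  shows "total_cost \<gamma> = (\<integral>y. fst y * snd y \<partial>\<nu>) - (\<integral>x. fst x * snd x \<partial>distr \<gamma> borel fst)"
proof -
  have "\<gamma> \<in> P2" "distr \<gamma> borel snd = \<nu>" "barycentric_projection \<gamma> (\<lambda>x. x)"
    using assms by (simp_all add: Gamma_mart_iff)
  moreover have "(\<lambda>x::pt. snd x * fst x) = (\<lambda>x. fst x * snd x)"
    by (auto simp: mult.commute)
  ultimately show ?thesis
    using total_cost_barycentric_projection[of \<gamma> "\<lambda>x. x"] by simp
qed

section \<open>Perturbing an optimal martingale plan\<close>

definition shift_toward :: "real \<Rightarrow> (pt \<Rightarrow> pt) \<Rightarrow> pt \<Rightarrow> pt" where
  "shift_toward t h x = (1 - t) *\<^sub>R x + t *\<^sub>R h x"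

definition perturbed_plan :: "real \<Rightarrow> (pt \<Rightarrow> pt) \<Rightarrow> (pt \<times> pt) measure \<Rightarrow> (pt \<times> pt) measure \<Rightarrow> (pt \<times> pt) measure" where
  "perturbed_plan t h \<gamma> \<pi> = mix_measure t
     (distr \<gamma> borel (\<lambda>p. (shift_toward t h (fst p), snd p)))
     (distr \<pi> borel (\<lambda>p. (shift_toward t h (fst p), snd p)))"

context
  fixes \<gamma> \<pi> :: "(pt \<times> pt) measure" and \<nu> :: "pt measure" and h :: "pt \<Rightarrow> pt" and t :: real
  assumes \<gamma>: "\<gamma> \<in> Gamma_mart \<nu>" and \<pi>: "\<pi> \<in> Couplings (distr \<gamma> borel fst) \<nu>"
    and h: "barycentric_projection \<pi> h" and t: "0 \<le> t" "t \<le> 1"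
begin

lemma perturbation_P2: "\<gamma> \<in> P2" "\<pi> \<in> P2"
  and perturbation_marginals: "distr \<pi> borel fst = distr \<gamma> borel fst"
    "distr \<gamma> borel snd = \<nu>" "distr \<pi> borel snd = \<nu>"
proof -
  show \<gamma>_P2: "\<gamma> \<in> P2" and \<gamma>_snd: "distr \<gamma> borel snd = \<nu>"
    using \<gamma> by (simp_all add: Gamma_mart_iff)
  show "distr \<pi> borel fst = distr \<gamma> borel fst" "distr \<pi> borel snd = \<nu>"
    using \<pi> by (simp_all add: Couplings_def)
  show "\<pi> \<in> P2"
    using \<pi> Couplings_subset_P2[OF P2_marginals[OF \<gamma>_P2]] \<gamma>_snd by blast
qed

lemma perturbation_measurable:
  "h \<in> borel_measurable borel" "shift_toward t h \<in> borel_measurable borel"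
  "(\<lambda>p::pt \<times> pt. (shift_toward t h (fst p), snd p)) \<in> borel \<rightarrow>\<^sub>M borel"
proof -
  show [measurable]: "h \<in> borel_measurable borel"
    using h by (simp add: barycentric_projection_def)
  show [measurable]: "shift_toward t h \<in> borel_measurable borel"
    unfolding shift_toward_def by measurable
  show "(\<lambda>p::pt \<times> pt. (shift_toward t h (fst p), snd p)) \<in> borel \<rightarrow>\<^sub>M borel"
    by measurable
qed

lemma prob_space_perturbed_plan_components:
  "prob_space (distr \<gamma> borel (\<lambda>p. (shift_toward t h (fst p), snd p)))"
  "prob_space (distr \<pi> borel (\<lambda>p. (shift_toward t h (fst p), snd p)))"
proof -
  have [measurable_cong]: "sets \<gamma> = sets borel" "sets \<pi> = sets borel"
    using P2D(2) perturbation_P2 by blast+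
  have [measurable]: "(\<lambda>p::pt \<times> pt. (shift_toward t h (fst p), snd p)) \<in> borel \<rightarrow>\<^sub>M borel"
    by (rule perturbation_measurable(3))
  show "prob_space (distr \<gamma> borel (\<lambda>p. (shift_toward t h (fst p), snd p)))"
    "prob_space (distr \<pi> borel (\<lambda>p. (shift_toward t h (fst p), snd p)))"
    using P2D(1) perturbation_P2 by (auto intro!: prob_space.prob_space_distr)
qed

lemma prob_space_perturbed_plan: "prob_space (perturbed_plan t h \<gamma> \<pi>)"
  and sets_perturbed_plan: "sets (perturbed_plan t h \<gamma> \<pi>) = sets borel"
  unfolding perturbed_plan_def using prob_space_perturbed_plan_components
  by (simp_all add: prob_space_mix_measure sets_mix_measure)

lemma integral_perturbed_plan:
  fixes f :: "pt \<times> pt \<Rightarrow> real"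
  assumes f: "f \<in> borel_measurable borel"
    and int: "integrable \<gamma> (\<lambda>p. f (shift_toward t h (fst p), snd p))"
      "integrable \<pi> (\<lambda>p. f (shift_toward t h (fst p), snd p))"
  shows "integral\<^sup>L (perturbed_plan t h \<gamma> \<pi>) f =
    t * (\<integral>p. f (shift_toward t h (fst p), snd p) \<partial>\<pi>) + (1 - t) * (\<integral>p. f (shift_toward t h (fst p), snd p) \<partial>\<gamma>)"
proof -
  let ?T = "\<lambda>p::pt \<times> pt. (shift_toward t h (fst p), snd p)"
  have [measurable_cong]: "sets \<gamma> = sets borel" "sets \<pi> = sets borel"
    using P2D(2) perturbation_P2 by blast+
  have [measurable]: "?T \<in> borel \<rightarrow>\<^sub>M borel"
    by (rule perturbation_measurable(3))
  have T: "?T \<in> \<gamma> \<rightarrow>\<^sub>M borel" "?T \<in> \<pi> \<rightarrow>\<^sub>M borel"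
    by measurable
  have "has_bochner_integral (perturbed_plan t h \<gamma> \<pi>) f
      (t * integral\<^sup>L (distr \<pi> borel ?T) f + (1 - t) * integral\<^sup>L (distr \<gamma> borel ?T) f)"
    unfolding perturbed_plan_def
    using prob_space_perturbed_plan_components t T f int
    by (intro has_bochner_integral_mix_measure) (simp_all add: integrable_distr_eq)
  then show ?thesis
    using T f by (simp add: has_bochner_integral_iff integral_distr)
qed

lemma distr_fst_perturbed_plan:
    "distr (perturbed_plan t h \<gamma> \<pi>) borel fst = distr (distr \<gamma> borel fst) borel (shift_toward t h)"
  and distr_snd_perturbed_plan: "distr (perturbed_plan t h \<gamma> \<pi>) borel snd = \<nu>"
proof -
  let ?T = "\<lambda>p::pt \<times> pt. (shift_toward t h (fst p), snd p)"
  have shift [measurable]: "shift_toward t h \<in> borel_measurable borel"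
    by (rule perturbation_measurable(2))
  have mix: "distr (perturbed_plan t h \<gamma> \<pi>) borel g
      = mix_measure t (distr (distr \<gamma> borel ?T) borel g) (distr (distr \<pi> borel ?T) borel g)"
    if "g \<in> borel \<rightarrow>\<^sub>M (borel :: pt measure)" for g
    unfolding perturbed_plan_def
    using prob_space_perturbed_plan_components that by (intro distr_mix_measure) simp_all
  have \<gamma>\<pi> [measurable_cong]: "sets \<gamma> = sets borel" "sets \<pi> = sets borel"
    using P2D(2) perturbation_P2 by blast+
  have "prob_space (distr (distr \<gamma> borel fst) borel (shift_toward t h))"
    by (rule prob_space.prob_space_distr[OF P2D(1)[OF P2_marginals(1)[OF perturbation_P2(1)]]]) measurable
  then show "distr (perturbed_plan t h \<gamma> \<pi>) borel fst = distr (distr \<gamma> borel fst) borel (shift_toward t h)"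
    using mix[of fst] distr_map_fst[OF \<gamma>\<pi>(1) shift] distr_map_fst[OF \<gamma>\<pi>(2) shift] perturbation_marginals(1)
    by (simp add: mix_measure_same)
  have "prob_space \<nu>"
    using P2D(1)[OF P2_marginals(2)[OF perturbation_P2(1)]] perturbation_marginals(2) by simp
  then show "distr (perturbed_plan t h \<gamma> \<pi>) borel snd = \<nu>"
    using mix[of snd] distr_map_fst[OF \<gamma>\<pi>(1) shift] distr_map_fst[OF \<gamma>\<pi>(2) shift] perturbation_marginals(2,3)
    by (simp add: mix_measure_same)
qed

lemma integral_fst_perturbed_plan:
  fixes g :: "pt \<Rightarrow> real"
  assumes [measurable]: "g \<in> borel_measurable borel"
  shows "(\<integral>q. g (fst q) \<partial>perturbed_plan t h \<gamma> \<pi>) = (\<integral>x. g (shift_toward t h x) \<partial>distr \<gamma> borel fst)"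
proof -
  have [measurable_cong]: "sets (perturbed_plan t h \<gamma> \<pi>) = sets borel"
    by (rule sets_perturbed_plan)
  have [measurable]: "shift_toward t h \<in> borel_measurable borel"
    by (rule perturbation_measurable(2))
  have "(\<integral>q. g (fst q) \<partial>perturbed_plan t h \<gamma> \<pi>) = (\<integral>x. g x \<partial>distr (perturbed_plan t h \<gamma> \<pi>) borel fst)"
    by (rule integral_distr[symmetric]) measurable
  then show ?thesis
    by (simp add: distr_fst_perturbed_plan integral_distr)
qed

lemma perturbed_plan_martingale_test:
  assumes l: "l \<in> {fst, snd}" and S: "S \<in> sets borel"
  shows "(\<integral>q. indicator S (fst q) * l (snd q) \<partial>perturbed_plan t h \<gamma> \<pi>)
    = (\<integral>q. indicator S (fst q) * l (fst q) \<partial>perturbed_plan t h \<gamma> \<pi>)"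
proof -
  let ?\<mu> = "distr \<gamma> borel fst" and ?z = "shift_toward t h"
  define \<psi> :: "pt \<Rightarrow> real" where "\<psi> x = indicator S (?z x)" for x
  have \<gamma>: "\<gamma> \<in> P2" "barycentric_projection \<gamma> (\<lambda>x. x)" and \<pi>: "\<pi> \<in> P2" "barycentric_projection \<pi> h"
    using perturbation_P2 \<gamma> h by (simp_all add: Gamma_mart_iff)
  have [measurable]: "S \<in> sets borel" "?z \<in> borel_measurable borel" "h \<in> borel_measurable borel"
    using S perturbation_measurable(1,2) by simp_all
  have [measurable]: "l \<in> borel_measurable borel"
    using l by (intro borel_measurable_bounded_linear bounded_linear_fst_snd)
  have \<psi>_meas [measurable]: "\<psi> \<in> borel_measurable borel"
    unfolding \<psi>_def by measurable
  have "finite_measure ?\<mu>"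
    using P2D(1)[OF P2_marginals(1)[OF \<gamma>(1)]] by (rule prob_space.finite_measure)
  then have \<psi>_sq: "integrable ?\<mu> (\<lambda>x. (\<psi> x)\<^sup>2)"
    by (rule finite_measure.integrable_const_bound[where B=1]) (auto simp: \<psi>_def indicator_def)
  note \<gamma>_int = integrable_barycentric_projection[OF \<gamma> l \<psi>_meas \<psi>_sq]
    integral_barycentric_projection[OF \<gamma> l \<psi>_meas \<psi>_sq]
  note \<pi>_int = integrable_barycentric_projection[OF \<pi> l \<psi>_meas, unfolded perturbation_marginals(1), OF \<psi>_sq]
    integral_barycentric_projection[OF \<pi> l \<psi>_meas, unfolded perturbation_marginals(1), OF \<psi>_sq]
  have "(\<integral>q. indicator S (fst q) * l (snd q) \<partial>perturbed_plan t h \<gamma> \<pi>)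
      = t * (\<integral>p. \<psi> (fst p) * l (snd p) \<partial>\<pi>) + (1 - t) * (\<integral>p. \<psi> (fst p) * l (snd p) \<partial>\<gamma>)"
    using integral_perturbed_plan[of "\<lambda>q. indicator S (fst q) * l (snd q)"] \<gamma>_int(1) \<pi>_int(1)
    by (simp add: \<psi>_def)
  also have "\<dots> = t * (\<integral>x. \<psi> x * l (h x) \<partial>?\<mu>) + (1 - t) * (\<integral>x. \<psi> x * l x \<partial>?\<mu>)"
    using \<gamma>_int(3) \<pi>_int(3) by simp
  also have "\<dots> = (\<integral>x. \<psi> x * l (?z x) \<partial>?\<mu>)"
  proof -
    have "\<psi> x * l (?z x) = (1 - t) * (\<psi> x * l x) + t * (\<psi> x * l (h x))" for x
      using l by (auto simp: shift_toward_def distrib_left)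
    then have "(\<integral>x. \<psi> x * l (?z x) \<partial>?\<mu>) = (1 - t) * (\<integral>x. \<psi> x * l x \<partial>?\<mu>) + t * (\<integral>x. \<psi> x * l (h x) \<partial>?\<mu>)"
      using \<gamma>_int(2) \<pi>_int(2) by simp
    then show ?thesis
      by simp
  qed
  also have "\<dots> = (\<integral>q. indicator S (fst q) * l (fst q) \<partial>perturbed_plan t h \<gamma> \<pi>)"
    using integral_fst_perturbed_plan[of "\<lambda>x. indicator S x * l x"] by (simp add: \<psi>_def)
  finally show ?thesis .
qed

lemma perturbed_plan_in_Gamma_mart: "perturbed_plan t h \<gamma> \<pi> \<in> Gamma_mart \<nu>"
proof -
  let ?\<rho> = "perturbed_plan t h \<gamma> \<pi>" and ?\<mu> = "distr \<gamma> borel fst"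
  have [measurable_cong]: "sets ?\<rho> = sets borel"
    by (rule sets_perturbed_plan)
  have \<mu>: "?\<mu> \<in> P2"
    using P2_marginals(1)[OF perturbation_P2(1)] .
  have [measurable]: "h \<in> borel_measurable borel" "shift_toward t h \<in> borel_measurable borel"
    using perturbation_measurable(1,2) by simp_all
  have "integrable ?\<mu> (\<lambda>x. (norm ((1 - t) *\<^sub>R x + t *\<^sub>R h x))\<^sup>2)"
    using square_integrable_barycentric_projection[OF perturbation_P2(2) h] P2D(3)[OF \<mu>]
    by (intro square_integrable_scaleR_add) (simp_all add: perturbation_marginals(1))
  then have "distr ?\<rho> borel fst \<in> P2"
    using P2D(1)[OF \<mu>] by (simp add: distr_fst_perturbed_plan distr_in_P2_iff shift_toward_def)
  moreover have "distr ?\<rho> borel snd \<in> P2"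
    using P2_marginals(2)[OF perturbation_P2(1)] by (simp add: distr_snd_perturbed_plan perturbation_marginals(2))
  ultimately have \<rho>: "?\<rho> \<in> P2"
    by (rule P2_of_marginals[OF prob_space_perturbed_plan sets_perturbed_plan])
  have "AE p in ?\<rho>. real_cond_exp ?\<rho> (vimage_algebra (space ?\<rho>) fst borel) (\<lambda>q. l (snd q)) p = l (fst p)"
    if l: "l \<in> {fst, snd}" for l :: "pt \<Rightarrow> real"
  proof (rule real_cond_exp_vimage_charact)
    have l_lin: "bounded_linear l"
      using l by (rule bounded_linear_fst_snd)
    then show "l \<in> borel_measurable borel"
      by (rule borel_measurable_bounded_linear)
    show "integrable ?\<rho> (\<lambda>q. l (snd q))" "integrable ?\<rho> (\<lambda>q. l (fst q))"
      using P2_integrable_bounded_linear[OF \<rho> bounded_linear_compose[OF l_lin bounded_linear_snd]]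
        P2_integrable_bounded_linear[OF \<rho> bounded_linear_compose[OF l_lin bounded_linear_fst]]
      by simp_all
    show "finite_measure ?\<rho>"
      by (rule prob_space.finite_measure[OF prob_space_perturbed_plan])
    show "fst \<in> ?\<rho> \<rightarrow>\<^sub>M borel"
      by measurable
  qed (rule perturbed_plan_martingale_test[OF l])
  with \<rho> show ?thesis
    by (simp add: Gamma_mart_iff barycentric_projection_def distr_snd_perturbed_plan)
qed

lemma total_cost_perturbed_plan:
  "total_cost (perturbed_plan t h \<gamma> \<pi>) = (\<integral>y. fst y * snd y \<partial>\<nu>)
    - (\<integral>x. fst (shift_toward t h x) * snd (shift_toward t h x) \<partial>distr \<gamma> borel fst)"
proof -
  have [measurable]: "shift_toward t h \<in> borel_measurable borel"
    by (rule perturbation_measurable(2))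
  show ?thesis
    using total_cost_Gamma_mart[OF perturbed_plan_in_Gamma_mart]
    by (simp add: distr_fst_perturbed_plan integral_distr)
qed

end

section \<open>First-order condition\<close>

lemma quadratic_slope_at_zero_le:
  fixes a d e :: real
  assumes "\<And>t. 0 < t \<Longrightarrow> t < 1 \<Longrightarrow> (1 - t)\<^sup>2 * a + t * (1 - t) * d + t\<^sup>2 * e \<le> a"
  shows "d \<le> 2 * a"
proof -
  have "((\<lambda>t. d - 2 * a + t * (a - d + e)) \<longlongrightarrow> d - 2 * a) (at_right 0)"
    by (auto intro!: tendsto_eq_intros)
  moreover have "eventually (\<lambda>t. d - 2 * a + t * (a - d + e) \<le> 0) (at_right (0::real))"
  proof (rule eventually_at_rightI[of 0 1])
    fix t :: real assume "t \<in> {0<..<1}"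
    moreover have "(1 - t)\<^sup>2 * a + t * (1 - t) * d + t\<^sup>2 * e - a = t * (d - 2 * a + t * (a - d + e))"
      by (simp add: power2_eq_square algebra_simps)
    ultimately have "0 < t" "t * (d - 2 * a + t * (a - d + e)) \<le> 0"
      using assms[of t] by auto
    then show "d - 2 * a + t * (a - d + e) \<le> 0"
      by (simp add: mult_le_0_iff)
  qed simp
  ultimately show ?thesis
    using tendsto_upperbound by fastforce
qed

lemma integral_cross_terms_le:
  fixes u v :: "'a \<Rightarrow> real \<times> real"
  assumes meas [measurable]: "u \<in> borel_measurable M" "v \<in> borel_measurable M"
    and sq: "integrable M (\<lambda>x. (norm (u x))\<^sup>2)" "integrable M (\<lambda>x. (norm (v x))\<^sup>2)"
    and min: "\<And>t. 0 < t \<Longrightarrow> t < 1 \<Longrightarrow>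
      (\<integral>x. fst ((1 - t) *\<^sub>R u x + t *\<^sub>R v x) * snd ((1 - t) *\<^sub>R u x + t *\<^sub>R v x) \<partial>M)
        \<le> (\<integral>x. fst (u x) * snd (u x) \<partial>M)"
  shows "(\<integral>x. fst (u x) * snd (v x) \<partial>M) + (\<integral>x. snd (u x) * fst (v x) \<partial>M)
    \<le> 2 * (\<integral>x. fst (u x) * snd (u x) \<partial>M)"
proof (rule quadratic_slope_at_zero_le)
  fix t :: real assume t: "0 < t" "t < 1"
  have m: "(\<lambda>x. fst (u x)) \<in> borel_measurable M" "(\<lambda>x. snd (u x)) \<in> borel_measurable M"
    "(\<lambda>x. fst (v x)) \<in> borel_measurable M" "(\<lambda>x. snd (v x)) \<in> borel_measurable M"
    using meas by (auto intro: measurable_compose[OF _ measurable_fst_borel] measurable_compose[OF _ measurable_snd_borel])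
  have u1: "integrable M (\<lambda>x. (fst (u x))\<^sup>2)" and u2: "integrable M (\<lambda>x. (snd (u x))\<^sup>2)"
    and v1: "integrable M (\<lambda>x. (fst (v x))\<^sup>2)" and v2: "integrable M (\<lambda>x. (snd (v x))\<^sup>2)"
    using sq by (simp_all add: square_integrable_bounded_linear bounded_linear_fst bounded_linear_snd)
  have "integrable M (\<lambda>x. fst (u x) * snd (u x))" "integrable M (\<lambda>x. fst (u x) * snd (v x))"
    "integrable M (\<lambda>x. snd (u x) * fst (v x))" "integrable M (\<lambda>x. fst (v x) * snd (v x))"
    using integrable_mult_square_integrable[OF m(1,2) u1 u2] integrable_mult_square_integrable[OF m(1,4) u1 v2]
      integrable_mult_square_integrable[OF m(2,3) u2 v1] integrable_mult_square_integrable[OF m(3,4) v1 v2]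
    by simp_all
  moreover have "fst ((1 - t) *\<^sub>R u x + t *\<^sub>R v x) * snd ((1 - t) *\<^sub>R u x + t *\<^sub>R v x)
      = (1 - t)\<^sup>2 * (fst (u x) * snd (u x)) + t * (1 - t) * (fst (u x) * snd (v x))
        + t * (1 - t) * (snd (u x) * fst (v x)) + t\<^sup>2 * (fst (v x) * snd (v x))" for x
    by (simp add: power2_eq_square algebra_simps)
  ultimately show "(1 - t)\<^sup>2 * (\<integral>x. fst (u x) * snd (u x) \<partial>M)
      + t * (1 - t) * ((\<integral>x. fst (u x) * snd (v x) \<partial>M) + (\<integral>x. snd (u x) * fst (v x) \<partial>M))
      + t\<^sup>2 * (\<integral>x. fst (v x) * snd (v x) \<partial>M) \<le> (\<integral>x. fst (u x) * snd (u x) \<partial>M)"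
    using min[OF t] by (simp add: distrib_left)
qed


theorem corollary2:
  fixes \<nu> :: "pt measure" and \<gamma> :: "(pt \<times> pt) measure"
  assumes "\<nu> \<in> P2"
    and "\<gamma> \<in> Gamma_mart \<nu>"
    and "\<forall>\<gamma>'\<in>Gamma_mart \<nu>. total_cost \<gamma> \<le> total_cost \<gamma>'"
  shows "\<forall>\<pi>\<in>Couplings (distr \<gamma> borel fst) \<nu>. total_cost \<gamma> \<le> total_cost \<pi>"
proof
  fix \<pi> assume \<pi>: "\<pi> \<in> Couplings (distr \<gamma> borel fst) \<nu>"
  let ?\<mu> = "distr \<gamma> borel fst"
  have \<mu>: "?\<mu> \<in> P2"
    using assms(2) P2_marginals(1) by (auto simp: Gamma_mart_iff)
  have \<pi>_P2: "\<pi> \<in> P2" and \<pi>_marginals: "distr \<pi> borel fst = ?\<mu>" "distr \<pi> borel snd = \<nu>"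
    using \<pi> Couplings_subset_P2[OF \<mu> assms(1)] by (auto simp: Couplings_def)
  obtain h where h: "barycentric_projection \<pi> h"
    using barycentric_projection_exists P2D(2)[OF \<pi>_P2] by blast
  have [measurable]: "h \<in> borel_measurable borel"
    using h by (simp add: barycentric_projection_def)
  have "(\<integral>x. fst x * snd (h x) \<partial>?\<mu>) + (\<integral>x. snd x * fst (h x) \<partial>?\<mu>) \<le> 2 * (\<integral>x. fst x * snd x \<partial>?\<mu>)"
  proof (rule integral_cross_terms_le[where u="\<lambda>x. x" and v=h])
    show "integrable ?\<mu> (\<lambda>x. (norm x)\<^sup>2)" "integrable ?\<mu> (\<lambda>x. (norm (h x))\<^sup>2)"
      using P2D(3)[OF \<mu>] square_integrable_barycentric_projection[OF \<pi>_P2 h] \<pi>_marginals by simp_all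
    fix t :: real assume t: "0 < t" "t < 1"
    then have "total_cost \<gamma> \<le> total_cost (perturbed_plan t h \<gamma> \<pi>)"
      using assms(3) perturbed_plan_in_Gamma_mart[OF assms(2) \<pi> h] by simp
    then show "(\<integral>x. fst ((1 - t) *\<^sub>R x + t *\<^sub>R h x) * snd ((1 - t) *\<^sub>R x + t *\<^sub>R h x) \<partial>?\<mu>)
        \<le> (\<integral>x. fst x * snd x \<partial>?\<mu>)"
      using total_cost_Gamma_mart[OF assms(2)] total_cost_perturbed_plan[OF assms(2) \<pi> h] t
      by (simp add: shift_toward_def)
  qed measurable
  then show "total_cost \<gamma> \<le> total_cost \<pi>"
    using total_cost_Gamma_mart[OF assms(2)] total_cost_barycentric_projection[OF \<pi>_P2 h] \<pi>_marginals
    by simp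
qed

end
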